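(* Let $\{h_j,j\ge1\}$ be any orthonormal basis of $L^2[0,1]$, let $0\le x_1<x_2\le1$ and $\alpha>0$. Then $$\Big(\int_{x_1}^{x_2}h_j(x)^2\,dx\Big)^{1/2}>j^{-1/2-\alpha}$$ for infinitely many $j$. *)

theory Defs
  imports "HOL-Analysis.Analysis"
begin

definition sq_int01 :: "(real \<Rightarrow> real) \<Rightarrow> bool" where
  "sq_int01 f \<longleftrightarrow> set_borel_measurable lborel {0..1} f \<and>
     set_integrable lborel {0..1} (\<lambda>x. (f x)^2)"

definition inner01 :: "(real \<Rightarrow> real) \<Rightarrow> (real \<Rightarrow> real) \<Rightarrow> real" where
  "inner01 f g = (LINT x:{0..1}|lborel. f x * g x)"

definition ONB01 :: "(nat \<Rightarrow> real \<Rightarrow> real) \<Rightarrow> bool" where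
  "ONB01 h \<longleftrightarrow>
     (\<forall>j\<ge>1. sq_int01 (h j)) \<and>
     (\<forall>i\<ge>1. \<forall>j\<ge>1. inner01 (h i) (h j) = (if i = j then 1 else 0)) \<and>
     (\<forall>f. sq_int01 f \<and> (\<forall>j\<ge>1. inner01 f (h j) = 0) \<longrightarrow>
          (AE x in lborel. x \<in> {0..1} \<longrightarrow> f x = 0))"

end

theory Submission
  imports Defs
begin

text \<open>Suppose the local masses \<open>a j\<close> of \<open>h j\<close> on \<open>[x1, x2]\<close> were eventually at most
  \<open>j powr (-1 - 2\<alpha>)\<close>. Then their sums \<open>A k\<close> over the dyadic blocks \<open>[2^k, 2^(k+1))\<close> decay
  geometrically, so even \<open>\<Sum>k. sqrt (A k)\<close> converges. Split \<open>[x1, x2]\<close> into \<open>n > \<Sum>k. A k\<close>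
  subintervals. Their normalised indicators \<open>g m\<close> are orthonormal and supported in \<open>[x1, x2]\<close>, so
  Bessel gives \<open>\<Sum>m<n. \<langle>g m, h j\<rangle>\<^sup>2 \<le> a j\<close>, while Parseval gives \<open>\<Sum>j. \<langle>g m, h j\<rangle>\<^sup>2 = 1\<close>
  for each \<open>m\<close>; summing, \<open>n \<le> \<Sum>j. a j < n\<close>.

  Parseval is obtained without the completeness of \<open>L\<^sup>2\<close>: when the block norms of the
  coefficients are summable, the expansion grouped into dyadic blocks converges absolutely almost
  everywhere to a square-integrable function with the same coefficients, so by completeness of the
  basis it coincides with \<open>g m\<close>.\<close>

section \<open>Square-integrable functions\<close>

definition square_integrable :: "'a measure \<Rightarrow> ('a \<Rightarrow> real) \<Rightarrow> bool" where
  "square_integrable M u \<longleftrightarrow> u \<in> borel_measurable M \<and> integrable M (\<lambda>x. (u x)^2)"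

lemma square_integrable_mult:
  assumes "square_integrable M u" "square_integrable M v"
  shows "integrable M (\<lambda>x. u x * v x)"
proof (rule Bochner_Integration.integrable_bound)
  show "integrable M (\<lambda>x. ((u x)^2 + (v x)^2) / 2)"
    using assms unfolding square_integrable_def by auto
  show "AE x in M. norm (u x * v x) \<le> norm (((u x)^2 + (v x)^2) / 2)"
  proof (rule AE_I2)
    fix x
    have "0 \<le> (\<bar>u x\<bar> - \<bar>v x\<bar>)^2" by simp
    then show "norm (u x * v x) \<le> norm (((u x)^2 + (v x)^2) / 2)"
      by (simp add: power2_eq_square abs_mult algebra_simps)
  qed
qed (use assms in \<open>auto simp: square_integrable_def\<close>)

lemma Cauchy_Schwarz_integral:
  assumes u: "square_integrable M u" and v: "square_integrable M v"
  shows "(\<integral>x. \<bar>u x * v x\<bar> \<partial>M) \<le> sqrt (\<integral>x. (u x)^2 \<partial>M) * sqrt (\<integral>x. (v x)^2 \<partial>M)"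
proof -
  have [measurable]: "u \<in> borel_measurable M" "v \<in> borel_measurable M"
    using u v by (auto simp: square_integrable_def)
  have nn: "(\<integral>\<^sup>+x. ennreal (f x) \<partial>M) = ennreal (\<integral>x. f x \<partial>M)"
    if "integrable M f" "\<And>x. 0 \<le> f x" for f
    using that by (intro nn_integral_eq_integral) auto
  have "ennreal ((\<integral>x. \<bar>u x * v x\<bar> \<partial>M)^2) = (\<integral>\<^sup>+x. ennreal \<bar>u x\<bar> * ennreal \<bar>v x\<bar> \<partial>M)^2"
  proof -
    have "integrable M (\<lambda>x. \<bar>u x * v x\<bar>)"
      using square_integrable_mult[OF u v] by simp
    then have "ennreal (\<integral>x. \<bar>u x * v x\<bar> \<partial>M) = (\<integral>\<^sup>+x. ennreal \<bar>u x * v x\<bar> \<partial>M)"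
      by (intro nn[symmetric]) auto
    then show ?thesis
      by (simp add: abs_mult ennreal_mult ennreal_power[symmetric])
  qed
  also have "\<dots> \<le> (\<integral>\<^sup>+x. ennreal \<bar>u x\<bar> ^ 2 \<partial>M) * (\<integral>\<^sup>+x. ennreal \<bar>v x\<bar> ^ 2 \<partial>M)"
    by (rule Cauchy_Schwarz_nn_integral) auto
  also have "\<dots> = ennreal ((\<integral>x. (u x)^2 \<partial>M) * (\<integral>x. (v x)^2 \<partial>M))"
    using nn[of "\<lambda>x. (u x)^2"] nn[of "\<lambda>x. (v x)^2"] u v
    by (simp add: square_integrable_def ennreal_power ennreal_mult)
  finally have "(\<integral>x. \<bar>u x * v x\<bar> \<partial>M)^2 \<le> (\<integral>x. (u x)^2 \<partial>M) * (\<integral>x. (v x)^2 \<partial>M)"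
    by (subst (asm) ennreal_le_iff) (auto intro!: mult_nonneg_nonneg integral_nonneg_AE)
  moreover have "0 \<le> (\<integral>x. \<bar>u x * v x\<bar> \<partial>M)"
    by (rule integral_nonneg_AE) simp
  ultimately show ?thesis
    by (metis real_sqrt_le_mono real_sqrt_mult real_sqrt_unique)
qed

lemma square_integrable_add:
  assumes "square_integrable M u" "square_integrable M v"
  shows "square_integrable M (\<lambda>x. u x + v x)"
proof -
  have "integrable M (\<lambda>x. (u x)^2 + (v x)^2 + 2 * (u x * v x))"
    using assms square_integrable_mult[OF assms] unfolding square_integrable_def by auto
  then have "integrable M (\<lambda>x. (u x + v x)^2)"
    by (rule back_subst[where P="integrable M"]) (auto simp: power2_eq_square algebra_simps)
  then show ?thesis using assms unfolding square_integrable_def by auto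
qed

lemma square_integrable_cmult:
  "square_integrable M u \<Longrightarrow> square_integrable M (\<lambda>x. c * u x)"
  by (simp add: square_integrable_def power_mult_distrib borel_measurable_times)

lemma square_integrable_diff:
  "square_integrable M u \<Longrightarrow> square_integrable M v \<Longrightarrow> square_integrable M (\<lambda>x. u x - v x)"
  using square_integrable_add[of M u "\<lambda>x. -1 * v x"] square_integrable_cmult by fastforce

lemma square_integrable_sum:
  "(\<And>i. i \<in> D \<Longrightarrow> square_integrable M (u i)) \<Longrightarrow> square_integrable M (\<lambda>x. \<Sum>i\<in>D. u i x)"
proof (induction D rule: infinite_finite_induct)
  case (insert i D)
  then show ?case by (simp add: square_integrable_add)
qed (auto simp: square_integrable_def)

lemma indicator_mult_square: "(indicator A x * f x)^2 = indicator A x * (f x)^2" for f :: "'a \<Rightarrow> real"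
  by (simp add: indicator_def)

lemma square_integrable_indicator_mult:
  assumes "square_integrable M u" "A \<in> sets M"
  shows "square_integrable M (\<lambda>x. indicator A x * u x)"
proof -
  have "integrable M (\<lambda>x. indicator A x * (u x)^2)"
    using assms integrable_real_mult_indicator[of A M "\<lambda>x. (u x)^2"]
    by (simp add: square_integrable_def mult.commute)
  then show ?thesis
    using assms by (simp add: square_integrable_def indicator_mult_square borel_measurable_times)
qed

definition normalized_indicator :: "'a measure \<Rightarrow> 'a set \<Rightarrow> 'a \<Rightarrow> real" where
  "normalized_indicator M A x = indicator A x / sqrt (measure M A)"

lemma
  assumes "A \<in> sets M" "0 < measure M A" "emeasure M A < \<infinity>"
  shows square_integrable_normalized_indicator: "square_integrable M (normalized_indicator M A)"
    and integral_normalized_indicator_square: "(\<integral>x. (normalized_indicator M A x)^2 \<partial>M) = 1"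
proof -
  have sq: "(normalized_indicator M A x)^2 = indicator A x / measure M A" for x
    using assms(2) by (simp add: normalized_indicator_def power_divide indicator_def)
  have "integrable M (\<lambda>x. (normalized_indicator M A x)^2)"
    using assms by (simp add: sq integrable_indicator_iff)
  then show "square_integrable M (normalized_indicator M A)"
    using assms(1) by (simp add: square_integrable_def normalized_indicator_def[abs_def])
  show "(\<integral>x. (normalized_indicator M A x)^2 \<partial>M) = 1"
    using assms by (simp add: sq)
qed

lemma integral_mult_normalized_indicator_square_le:
  assumes A: "A \<in> sets M" "0 < measure M A" "emeasure M A < \<infinity>" and u: "square_integrable M u"
  shows "(\<integral>x. u x * normalized_indicator M A x \<partial>M)^2 \<le> (\<integral>x. indicator A x * (u x)^2 \<partial>M)"
proof -
  have u_A: "square_integrable M (\<lambda>x. indicator A x * u x)"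
    by (rule square_integrable_indicator_mult[OF u A(1)])
  have "\<bar>\<integral>x. u x * normalized_indicator M A x \<partial>M\<bar> =
      \<bar>\<integral>x. (indicator A x * u x) * normalized_indicator M A x \<partial>M\<bar>"
    by (intro arg_cong[where f=abs] Bochner_Integration.integral_cong)
      (auto simp: normalized_indicator_def indicator_def)
  also have "\<dots> \<le> (\<integral>x. \<bar>(indicator A x * u x) * normalized_indicator M A x\<bar> \<partial>M)"
    by (rule integral_abs_bound)
  also have "\<dots> \<le> sqrt (\<integral>x. indicator A x * (u x)^2 \<partial>M)"
    using Cauchy_Schwarz_integral[OF u_A square_integrable_normalized_indicator[OF A]]
    by (simp add: integral_normalized_indicator_square[OF A] indicator_mult_square)
  finally have "\<bar>\<integral>x. u x * normalized_indicator M A x \<partial>M\<bar>^2 \<le> sqrt (\<integral>x. indicator A x * (u x)^2 \<partial>M)^2"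
    by (rule power_mono) simp
  moreover have "0 \<le> (\<integral>x. indicator A x * (u x)^2 \<partial>M)"
    by (rule integral_nonneg_AE) simp
  ultimately show ?thesis
    by simp
qed

lemma integral_sum_indicator_le:
  fixes f :: "'a \<Rightarrow> real" and n :: nat
  assumes J: "\<And>m. J m \<in> sets M" and disj: "disjoint_family_on J {..<n}"
    and J_sub: "\<And>m. m < n \<Longrightarrow> J m \<subseteq> I" and I: "I \<in> sets M"
    and f: "integrable M f" and f_nonneg: "\<And>x. 0 \<le> f x"
  shows "(\<Sum>m<n. \<integral>x. indicator (J m) x * f x \<partial>M) \<le> (\<integral>x. indicator I x * f x \<partial>M)"
proof -
  have integrable: "integrable M (\<lambda>x. indicator A x * f x)" if "A \<in> sets M" for A
    using integrable_real_mult_indicator[OF that f] by (simp add: mult.commute)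
  have "(\<Sum>m<n. \<integral>x. indicator (J m) x * f x \<partial>M) = (\<integral>x. (\<Sum>m<n. indicator (J m) x * f x) \<partial>M)"
    using J by (intro Bochner_Integration.integral_sum[symmetric] integrable)
  also have "\<dots> = (\<integral>x. indicator (\<Union>m<n. J m) x * f x \<partial>M)"
  proof (intro Bochner_Integration.integral_cong)
    fix x
    have "indicator (\<Union>m<n. J m) x = (\<Sum>m<n. indicator (J m) x :: real)"
      by (rule indicator_UN_disjoint) (simp_all add: disj)
    then show "(\<Sum>m<n. indicator (J m) x * f x) = indicator (\<Union>m<n. J m) x * f x"
      by (simp add: sum_distrib_right)
  qed simp
  also have "\<dots> \<le> (\<integral>x. indicator I x * f x \<partial>M)"
    using J I J_sub f_nonneg
    by (intro integral_mono integrable mult_right_mono)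
      (auto simp: indicator_def)
  finally show ?thesis .
qed

lemma sum_square_integral_normalized_indicator_le:
  fixes n :: nat
  assumes J: "\<And>m. J m \<in> sets M" "\<And>m. 0 < measure M (J m)" "\<And>m. emeasure M (J m) < \<infinity>"
    and disj: "disjoint_family_on J {..<n}" and J_sub: "\<And>m. m < n \<Longrightarrow> J m \<subseteq> I"
    and I: "I \<in> sets M" and u: "square_integrable M u"
  shows "(\<Sum>m<n. (\<integral>x. normalized_indicator M (J m) x * u x \<partial>M)^2) \<le> (\<integral>x. indicator I x * (u x)^2 \<partial>M)"
proof -
  have "(\<Sum>m<n. (\<integral>x. normalized_indicator M (J m) x * u x \<partial>M)^2) \<le>
      (\<Sum>m<n. \<integral>x. indicator (J m) x * (u x)^2 \<partial>M)"
    using J u by (intro sum_mono)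
      (simp add: mult.commute[of "normalized_indicator _ _ _"] integral_mult_normalized_indicator_square_le)
  also have "\<dots> \<le> (\<integral>x. indicator I x * (u x)^2 \<partial>M)"
    using u by (intro integral_sum_indicator_le[OF J(1) disj J_sub I]) (auto simp: square_integrable_def)
  finally show ?thesis .
qed

section \<open>Series of square-integrable functions\<close>

lemma AE_summable_of_summable_integral:
  fixes f :: "nat \<Rightarrow> 'a \<Rightarrow> real"
  assumes f: "\<And>k. integrable M (f k)" and f_nonneg: "\<And>k x. 0 \<le> f k x"
    and summable: "summable (\<lambda>k. \<integral>x. f k x \<partial>M)"
  shows "AE x in M. summable (\<lambda>k. f k x)"
proof -
  have [measurable]: "\<And>k. f k \<in> borel_measurable M" using f by auto
  have "(\<integral>\<^sup>+x. (\<Sum>k. ennreal (f k x)) \<partial>M) = (\<Sum>k. \<integral>\<^sup>+x. ennreal (f k x) \<partial>M)"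
    by (rule nn_integral_suminf) auto
  also have "\<dots> = (\<Sum>k. ennreal (\<integral>x. f k x \<partial>M))"
    by (intro arg_cong[where f=suminf] ext nn_integral_eq_integral f) (auto simp: f_nonneg)
  also have "\<dots> = ennreal (\<Sum>k. \<integral>x. f k x \<partial>M)"
    by (rule suminf_ennreal2) (auto intro: summable integral_nonneg_AE simp: f_nonneg)
  finally have "(\<integral>\<^sup>+x. (\<Sum>k. ennreal (f k x)) \<partial>M) \<noteq> \<infinity>" by simp
  then have "AE x in M. (\<Sum>k. ennreal (f k x)) \<noteq> \<infinity>"
    by (intro nn_integral_PInf_AE) auto
  then show ?thesis
    by eventually_elim (rule summable_suminf_not_top, auto simp: f_nonneg)
qed

lemma weighted_Cauchy_Schwarz_suminf:
  fixes b w :: "nat \<Rightarrow> real"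
  assumes w_pos: "\<And>k. 0 < w k" and w: "summable w" and bw: "summable (\<lambda>k. (b k)^2 / w k)"
  shows "summable (\<lambda>k. \<bar>b k\<bar>)"
    and "(\<Sum>k. \<bar>b k\<bar>)^2 \<le> (\<Sum>k. w k) * (\<Sum>k. (b k)^2 / w k)"
proof -
  define C where "C = sqrt ((\<Sum>k. w k) * (\<Sum>k. (b k)^2 / w k))"
  have partial: "(\<Sum>k<n. \<bar>b k\<bar>) \<le> C" for n
  proof -
    have "(\<Sum>k<n. \<bar>b k\<bar>)^2 = (\<Sum>k<n. sqrt (w k) * (\<bar>b k\<bar> / sqrt (w k)))^2"
      using w_pos by (simp add: less_imp_le less_imp_neq[symmetric])
    also have "\<dots> \<le> (\<Sum>k<n. sqrt (w k)^2) * (\<Sum>k<n. (\<bar>b k\<bar> / sqrt (w k))^2)"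
      by (rule Cauchy_Schwarz_ineq_sum)
    also have "\<dots> = (\<Sum>k<n. w k) * (\<Sum>k<n. (b k)^2 / w k)"
      using w_pos by (simp add: less_imp_le power_divide)
    also have "\<dots> \<le> (\<Sum>k. w k) * (\<Sum>k. (b k)^2 / w k)"
      using w_pos by (intro mult_mono sum_le_suminf w bw sum_nonneg suminf_nonneg)
        (auto simp: less_imp_le)
    finally show ?thesis
      unfolding C_def by (intro real_le_rsqrt) auto
  qed
  show summable: "summable (\<lambda>k. \<bar>b k\<bar>)"
    by (rule summableI_nonneg_bounded[OF _ partial]) simp
  have "(\<Sum>k. \<bar>b k\<bar>) \<le> C"
    by (rule suminf_le_const[OF summable partial])
  moreover have "0 \<le> (\<Sum>k. \<bar>b k\<bar>)" by (rule suminf_nonneg[OF summable]) simp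
  ultimately have "(\<Sum>k. \<bar>b k\<bar>)^2 \<le> C^2" by (rule power_mono)
  also have "C^2 = (\<Sum>k. w k) * (\<Sum>k. (b k)^2 / w k)"
    unfolding C_def using w_pos
    by (intro real_sqrt_pow2 mult_nonneg_nonneg suminf_nonneg w bw) (auto simp: less_imp_le)
  finally show "(\<Sum>k. \<bar>b k\<bar>)^2 \<le> (\<Sum>k. w k) * (\<Sum>k. (b k)^2 / w k)" .
qed

lemma summable_of_summable_sqrt:
  fixes a :: "nat \<Rightarrow> real"
  assumes nonneg: "\<And>k. 0 \<le> a k" and summable: "summable (\<lambda>k. sqrt (a k))"
  shows "summable a"
proof (rule summable_comparison_test_ev[OF _ summable])
  have "eventually (\<lambda>k. sqrt (a k) \<le> 1) sequentially"
    using order_tendstoD(2)[OF summable_LIMSEQ_zero[OF summable], of 1] by (auto elim: eventually_mono)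
  then show "eventually (\<lambda>k. norm (a k) \<le> sqrt (a k)) sequentially"
  proof eventually_elim
    case (elim k)
    have "a k = sqrt (a k) * sqrt (a k)" using nonneg[of k] by simp
    also have "\<dots> \<le> sqrt (a k) * 1" using elim nonneg[of k] by (intro mult_left_mono) simp_all
    finally show ?case using nonneg[of k] by simp
  qed
qed

lemma
  fixes B :: "nat \<Rightarrow> 'a \<Rightarrow> real"
  assumes B: "\<And>k. square_integrable M (B k)"
    and w_pos: "\<And>k. 0 < w k" and w: "summable w" and norm_le: "\<And>k. sqrt (\<integral>x. (B k x)^2 \<partial>M) \<le> w k"
  shows AE_summable_square_div: "AE x in M. summable (\<lambda>k. (B k x)^2 / w k)"
    and integrable_suminf_square_div: "integrable M (\<lambda>x. \<Sum>k. (B k x)^2 / w k)"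
proof -
  have square_div: "integrable M (\<lambda>x. (B k x)^2 / w k)" for k
    using B[of k] by (simp add: square_integrable_def)
  have square_div_nonneg: "0 \<le> (B k x)^2 / w k" for k x
    using w_pos[of k] by simp
  have "(\<integral>x. (B k x)^2 / w k \<partial>M) \<le> w k" for k
  proof -
    have "(\<integral>x. (B k x)^2 / w k \<partial>M) = sqrt (\<integral>x. (B k x)^2 \<partial>M)^2 / w k"
      by (simp add: integral_nonneg_AE)
    also have "\<dots> \<le> (w k)^2 / w k"
      using norm_le[of k] w_pos[of k] by (intro divide_right_mono power_mono) simp_all
    also have "\<dots> = w k"
      using w_pos[of k] by (simp add: power2_eq_square)
    finally show ?thesis .
  qed
  then have "summable (\<lambda>k. \<integral>x. (B k x)^2 / w k \<partial>M)"
    using w_pos by (intro summable_comparison_test'[OF w, of 0]) (simp add: integral_nonneg_AE less_imp_le)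
  then show "AE x in M. summable (\<lambda>k. (B k x)^2 / w k)"
    and "integrable M (\<lambda>x. \<Sum>k. (B k x)^2 / w k)"
    using square_div square_div_nonneg
    by (auto intro!: AE_summable_of_summable_integral integrable_suminf simp: abs_of_pos[OF w_pos])
qed

lemma
  fixes B :: "nat \<Rightarrow> 'a \<Rightarrow> real"
  assumes B: "\<And>k. square_integrable M (B k)"
    and summable: "summable (\<lambda>k. sqrt (\<integral>x. (B k x)^2 \<partial>M))"
  shows AE_summable_abs_suminf: "AE x in M. summable (\<lambda>k. \<bar>B k x\<bar>)"
    and square_integrable_suminf: "square_integrable M (\<lambda>x. \<Sum>k. B k x)"
proof -
  \<comment> \<open>The \<open>2^-k\<close> only keeps the weights positive; Cauchy-Schwarz with weights \<open>w\<close> gives the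
    integrable majorant \<open>(\<Sum>k. w k) * (\<Sum>k. B k x\<^sup>2 / w k)\<close> of \<open>(\<Sum>k. \<bar>B k x\<bar>)\<^sup>2\<close>.\<close>
  define w where "w k = sqrt (\<integral>x. (B k x)^2 \<partial>M) + (1/2)^k" for k
  have [measurable]: "B k \<in> borel_measurable M" for k
    using B by (simp add: square_integrable_def)
  have w_pos: "0 < w k" for k
    unfolding w_def by (simp add: add_nonneg_pos integral_nonneg_AE)
  have w: "summable w"
    unfolding w_def using summable by (intro summable_add summable_geometric) simp_all
  have norm_le: "sqrt (\<integral>x. (B k x)^2 \<partial>M) \<le> w k" for k
    unfolding w_def by simp
  note AE_square_div = AE_summable_square_div[OF B w_pos w norm_le]
  have pointwise: "summable (\<lambda>k. \<bar>B k x\<bar>)"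
    "(\<Sum>k. B k x)^2 \<le> (\<Sum>k. w k) * (\<Sum>k. (B k x)^2 / w k)"
    if "summable (\<lambda>k. (B k x)^2 / w k)" for x
  proof -
    show abs: "summable (\<lambda>k. \<bar>B k x\<bar>)"
      by (rule weighted_Cauchy_Schwarz_suminf(1)[OF w_pos w that])
    have "(\<Sum>k. B k x)^2 \<le> (\<Sum>k. \<bar>B k x\<bar>)^2"
      using summable_rabs[OF abs] by (metis abs_ge_zero power2_abs power_mono)
    also have "\<dots> \<le> (\<Sum>k. w k) * (\<Sum>k. (B k x)^2 / w k)"
      by (rule weighted_Cauchy_Schwarz_suminf(2)[OF w_pos w that])
    finally show "(\<Sum>k. B k x)^2 \<le> (\<Sum>k. w k) * (\<Sum>k. (B k x)^2 / w k)" .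
  qed
  show "AE x in M. summable (\<lambda>k. \<bar>B k x\<bar>)"
    using AE_square_div by eventually_elim (rule pointwise)
  have "integrable M (\<lambda>x. (\<Sum>k. B k x)^2)"
  proof (rule Bochner_Integration.integrable_bound)
    show "integrable M (\<lambda>x. (\<Sum>k. w k) * (\<Sum>k. (B k x)^2 / w k))"
      using integrable_suminf_square_div[OF B w_pos w norm_le] by simp
    show "AE x in M. norm ((\<Sum>k. B k x)^2) \<le> norm ((\<Sum>k. w k) * (\<Sum>k. (B k x)^2 / w k))"
      using AE_square_div by eventually_elim (use pointwise(2) in \<open>force intro: order_trans[OF _ abs_ge_self]\<close>)
  qed simp
  then show "square_integrable M (\<lambda>x. \<Sum>k. B k x)"
    by (simp add: square_integrable_def)
qed

lemma sums_integral_suminf_mult: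
  fixes B :: "nat \<Rightarrow> 'a \<Rightarrow> real"
  assumes B: "\<And>k. square_integrable M (B k)"
    and summable: "summable (\<lambda>k. sqrt (\<integral>x. (B k x)^2 \<partial>M))"
    and u: "square_integrable M u"
  shows "(\<lambda>k. \<integral>x. B k x * u x \<partial>M) sums (\<integral>x. (\<Sum>k. B k x) * u x \<partial>M)"
proof -
  have [measurable]: "u \<in> borel_measurable M" "B k \<in> borel_measurable M" for k
    using B u by (auto simp: square_integrable_def)
  have AE_summable: "AE x in M. summable (\<lambda>k. \<bar>B k x\<bar>)"
    by (rule AE_summable_abs_suminf[OF B summable])
  have "(\<lambda>k. \<integral>x. B k x * u x \<partial>M) sums (\<integral>x. (\<Sum>k. B k x * u x) \<partial>M)"
  proof (rule sums_integral)
    show "integrable M (\<lambda>x. B k x * u x)" for k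
      by (rule square_integrable_mult[OF B u])
    show "AE x in M. summable (\<lambda>k. norm (B k x * u x))"
      using AE_summable by eventually_elim (auto simp: abs_mult intro: summable_mult2)
    show "summable (\<lambda>k. \<integral>x. norm (B k x * u x) \<partial>M)"
      using Cauchy_Schwarz_integral[OF B u]
      by (intro summable_comparison_test'[OF summable_mult2[OF summable], of 0])
        (auto intro: integral_nonneg_AE)
  qed
  also have "(\<integral>x. (\<Sum>k. B k x * u x) \<partial>M) = (\<integral>x. (\<Sum>k. B k x) * u x \<partial>M)"
    using AE_summable
    by (intro integral_cong_AE) (auto simp: suminf_mult2 summable_rabs_cancel elim!: eventually_mono)
  finally show ?thesis .
qed

section \<open>Dyadic blocks\<close>

definition dyadic_block :: "nat \<Rightarrow> nat set" where
  "dyadic_block k = {2^k..<2^Suc k}"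

lemma finite_dyadic_block [simp]: "finite (dyadic_block k)"
  by (simp add: dyadic_block_def)

lemma dyadic_block_ge_1: "j \<in> dyadic_block k \<Longrightarrow> 1 \<le> j"
  by (auto simp: dyadic_block_def intro: order_trans[OF one_le_power])

lemma ex1_dyadic_block:
  assumes "1 \<le> j"
  shows "\<exists>!k. j \<in> dyadic_block k"
proof (rule ex_ex1I)
  show "\<exists>k. j \<in> dyadic_block k"
    using ex_power_ivl1[of 2 j] assms by (auto simp: dyadic_block_def)
next
  fix k l assume "j \<in> dyadic_block k" "j \<in> dyadic_block l"
  then have "(2::nat)^k < 2^Suc l" "(2::nat)^l < 2^Suc k"
    by (auto simp: dyadic_block_def)
  then show "k = l"
    by (simp only: power_strict_increasing_iff[of 2])
qed

lemma dyadic_block_sum_le_geometric: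
  fixes a :: "nat \<Rightarrow> real" and \<alpha> :: real
  assumes "0 < \<alpha>" and decay: "\<And>j. N \<le> j \<Longrightarrow> a j \<le> real j powr (-1 - 2*\<alpha>)" and "N \<le> k"
  shows "(\<Sum>j\<in>dyadic_block k. a j) \<le> (2 powr (-2*\<alpha>))^k"
proof -
  \<comment> \<open>a block has \<open>2^k\<close> terms, each at most \<open>(2^k) powr (-1 - 2\<alpha>)\<close>\<close>
  have "(\<Sum>j\<in>dyadic_block k. a j) \<le> (\<Sum>j\<in>dyadic_block k. (2 powr k) powr (-1 - 2*\<alpha>))"
  proof (rule sum_mono)
    fix j assume "j \<in> dyadic_block k"
    then have "2^k \<le> j" by (simp add: dyadic_block_def)
    moreover have "k < 2^k" by (rule less_exp)
    ultimately have "a j \<le> real j powr (-1 - 2*\<alpha>)"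
      using \<open>N \<le> k\<close> by (intro decay) linarith
    also have "\<dots> \<le> (2 powr k) powr (-1 - 2*\<alpha>)"
    proof (rule powr_mono2')
      have "(2::real)^k \<le> real j"
        using \<open>2^k \<le> j\<close> by (metis of_nat_le_iff of_nat_numeral of_nat_power)
      then show "2 powr k \<le> real j" by (simp add: powr_realpow)
    qed (use \<open>0 < \<alpha>\<close> in simp_all)
    finally show "a j \<le> (2 powr k) powr (-1 - 2*\<alpha>)" .
  qed
  also have "\<dots> = 2 powr k * (2 powr k) powr (-1 - 2*\<alpha>)"
    by (simp add: dyadic_block_def powr_realpow)
  also have "\<dots> = (2 powr (-2*\<alpha>))^k"
    by (simp add: powr_powr powr_mult_base powr_realpow[symmetric] algebra_simps flip: powr_add)
  finally show ?thesis .
qed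

lemma summable_sqrt_dyadic_block_sums:
  fixes a :: "nat \<Rightarrow> real" and \<alpha> :: real
  assumes "0 < \<alpha>" and nonneg: "\<And>j. 0 \<le> a j"
    and decay: "eventually (\<lambda>j. a j \<le> real j powr (-1 - 2*\<alpha>)) sequentially"
  shows "summable (\<lambda>k. sqrt (\<Sum>j\<in>dyadic_block k. a j))"
proof -
  define r where "r = (2::real) powr (-2*\<alpha>)"
  have r: "0 < r" "r < 1" unfolding r_def using \<open>0 < \<alpha>\<close> by (auto intro: powr_less_one)
  obtain N where N: "\<And>j. N \<le> j \<Longrightarrow> a j \<le> real j powr (-1 - 2*\<alpha>)"
    using decay by (auto simp: eventually_sequentially)
  show ?thesis
  proof (rule summable_comparison_test'[where g="\<lambda>k. sqrt r ^ k" and N=N])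
    show "summable (\<lambda>k. sqrt r ^ k)"
      using r by (intro summable_geometric) simp
    show "norm (sqrt (\<Sum>j\<in>dyadic_block k. a j)) \<le> sqrt r ^ k" if "N \<le> k" for k
    proof -
      have "norm (sqrt (\<Sum>j\<in>dyadic_block k. a j)) = sqrt (\<Sum>j\<in>dyadic_block k. a j)"
        by (simp add: sum_nonneg nonneg)
      also have "\<dots> \<le> sqrt (r^k)"
        unfolding r_def by (rule real_sqrt_le_mono[OF dyadic_block_sum_le_geometric[OF \<open>0 < \<alpha>\<close> N that]])
      finally show ?thesis
        by (simp only: real_sqrt_power)
    qed
  qed
qed

section \<open>Orthonormal systems and a dyadic Parseval identity\<close>

locale orthonormal_system =
  fixes M :: "'a measure" and H :: "nat \<Rightarrow> 'a \<Rightarrow> real"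
  assumes square_integrable_basis: "\<And>j. square_integrable M (H j)"
    and orthonormal: "\<And>i j. 1 \<le> i \<Longrightarrow> 1 \<le> j \<Longrightarrow>
      (\<integral>x. H i x * H j x \<partial>M) = (if i = j then 1 else 0)"
begin

lemma square_integrable_expansion: "square_integrable M (\<lambda>x. \<Sum>j\<in>D. c j * H j x)"
  by (intro square_integrable_sum square_integrable_cmult square_integrable_basis)

lemma integral_expansion_mult:
  assumes "finite D" "square_integrable M u"
  shows "(\<integral>x. (\<Sum>j\<in>D. c j * H j x) * u x \<partial>M) = (\<Sum>j\<in>D. c j * (\<integral>x. H j x * u x \<partial>M))"
proof -
  have "(\<integral>x. (\<Sum>j\<in>D. c j * H j x) * u x \<partial>M) = (\<integral>x. (\<Sum>j\<in>D. c j * (H j x * u x)) \<partial>M)"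
    by (simp add: sum_distrib_right mult.assoc)
  also have "\<dots> = (\<Sum>j\<in>D. c j * (\<integral>x. H j x * u x \<partial>M))"
    using assms by (simp add: square_integrable_mult square_integrable_basis)
  finally show ?thesis .
qed

lemma integral_expansion_mult_basis:
  assumes "finite D" "D \<subseteq> {1..}" "1 \<le> m"
  shows "(\<integral>x. (\<Sum>j\<in>D. c j * H j x) * H m x \<partial>M) = (if m \<in> D then c m else 0)"
proof -
  have "(\<integral>x. (\<Sum>j\<in>D. c j * H j x) * H m x \<partial>M) = (\<Sum>j\<in>D. c j * (\<integral>x. H j x * H m x \<partial>M))"
    using assms(1) by (rule integral_expansion_mult[OF _ square_integrable_basis])
  also have "\<dots> = (\<Sum>j\<in>D. if j = m then c j else 0)"
    using assms by (intro sum.cong) (auto simp: orthonormal)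
  also have "\<dots> = (if m \<in> D then c m else 0)"
    using assms(1) by (simp add: sum.delta')
  finally show ?thesis .
qed

lemma integral_expansion_square:
  assumes "finite D" "D \<subseteq> {1..}"
  shows "(\<integral>x. (\<Sum>j\<in>D. c j * H j x)^2 \<partial>M) = (\<Sum>j\<in>D. (c j)^2)"
proof -
  have "(\<integral>x. (\<Sum>j\<in>D. c j * H j x)^2 \<partial>M) =
      (\<integral>x. (\<Sum>j\<in>D. c j * H j x) * (\<Sum>i\<in>D. c i * H i x) \<partial>M)"
    by (simp add: power2_eq_square)
  also have "\<dots> = (\<Sum>j\<in>D. c j * (\<integral>x. H j x * (\<Sum>i\<in>D. c i * H i x) \<partial>M))"
    by (rule integral_expansion_mult[OF assms(1) square_integrable_expansion])
  also have "\<dots> = (\<Sum>j\<in>D. (c j)^2)"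
    using assms integral_expansion_mult_basis[OF assms]
    by (intro sum.cong) (auto simp: mult.commute[of "H _ _"] power2_eq_square)
  finally show ?thesis .
qed

definition dyadic_expansion :: "(nat \<Rightarrow> real) \<Rightarrow> 'a \<Rightarrow> real" where
  "dyadic_expansion c x = (\<Sum>k. \<Sum>j\<in>dyadic_block k. c j * H j x)"

lemma
  assumes "summable (\<lambda>k. sqrt (\<Sum>j\<in>dyadic_block k. (c j)^2))"
  shows square_integrable_dyadic_expansion: "square_integrable M (dyadic_expansion c)"
    and sums_integral_dyadic_expansion_mult: "square_integrable M u \<Longrightarrow>
      (\<lambda>k. \<Sum>j\<in>dyadic_block k. c j * (\<integral>x. H j x * u x \<partial>M)) sums (\<integral>x. dyadic_expansion c x * u x \<partial>M)"
proof -
  have block_norm: "(\<integral>x. (\<Sum>j\<in>dyadic_block k. c j * H j x)^2 \<partial>M) = (\<Sum>j\<in>dyadic_block k. (c j)^2)" for k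
    by (auto intro: integral_expansion_square dyadic_block_ge_1)
  show "square_integrable M (dyadic_expansion c)"
    unfolding dyadic_expansion_def
    using assms by (intro square_integrable_suminf square_integrable_expansion) (simp add: block_norm)
  show "(\<lambda>k. \<Sum>j\<in>dyadic_block k. c j * (\<integral>x. H j x * u x \<partial>M)) sums (\<integral>x. dyadic_expansion c x * u x \<partial>M)"
    if u: "square_integrable M u"
  proof -
    have "(\<lambda>k. \<integral>x. (\<Sum>j\<in>dyadic_block k. c j * H j x) * u x \<partial>M) sums
        (\<integral>x. dyadic_expansion c x * u x \<partial>M)"
      unfolding dyadic_expansion_def
      by (rule sums_integral_suminf_mult[OF square_integrable_expansion _ u]) (simp add: block_norm assms)
    then show ?thesis
      by (simp add: integral_expansion_mult u)
  qed
qed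

lemma integral_dyadic_expansion_mult_basis:
  assumes summable: "summable (\<lambda>k. sqrt (\<Sum>j\<in>dyadic_block k. (c j)^2))" and m: "1 \<le> m"
  shows "(\<integral>x. dyadic_expansion c x * H m x \<partial>M) = c m"
proof -
  obtain k0 where block: "\<And>k. m \<in> dyadic_block k \<longleftrightarrow> k = k0"
    using ex1_dyadic_block[OF m] by blast
  have "(\<Sum>j\<in>dyadic_block k. c j * (\<integral>x. H j x * H m x \<partial>M)) = (if k = k0 then c m else 0)" for k
  proof -
    have "(\<Sum>j\<in>dyadic_block k. c j * (\<integral>x. H j x * H m x \<partial>M)) =
        (\<integral>x. (\<Sum>j\<in>dyadic_block k. c j * H j x) * H m x \<partial>M)"
      by (rule integral_expansion_mult[symmetric]) (simp_all add: square_integrable_basis)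
    also have "\<dots> = (if m \<in> dyadic_block k then c m else 0)"
      using m by (intro integral_expansion_mult_basis) (auto dest: dyadic_block_ge_1)
    finally show ?thesis
      by (simp only: block)
  qed
  then have "(\<lambda>k. \<Sum>j\<in>dyadic_block k. c j * (\<integral>x. H j x * H m x \<partial>M)) sums c m"
    using sums_single[of k0 "\<lambda>_. c m"] by simp
  moreover have "(\<lambda>k. \<Sum>j\<in>dyadic_block k. c j * (\<integral>x. H j x * H m x \<partial>M)) sums
      (\<integral>x. dyadic_expansion c x * H m x \<partial>M)"
    by (rule sums_integral_dyadic_expansion_mult[OF summable square_integrable_basis])
  ultimately show ?thesis
    by (simp add: sums_iff)
qed

end

locale orthonormal_basis_on = orthonormal_system +
  fixes S :: "'a set"
  assumes complete: "\<And>f. square_integrable M f \<Longrightarrow> (\<forall>j\<ge>1. (\<integral>x. f x * H j x \<partial>M) = 0) \<Longrightarrow>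
    AE x in M. x \<in> S \<longrightarrow> f x = 0"
begin

theorem dyadic_Parseval:
  assumes g: "square_integrable M g" and g_zero: "\<And>x. x \<notin> S \<Longrightarrow> g x = 0"
    and summable: "summable (\<lambda>k. sqrt (\<Sum>j\<in>dyadic_block k. (\<integral>x. g x * H j x \<partial>M)^2))"
  shows "(\<lambda>k. \<Sum>j\<in>dyadic_block k. (\<integral>x. g x * H j x \<partial>M)^2) sums (\<integral>x. (g x)^2 \<partial>M)"
proof -
  define c where "c j = (\<integral>x. g x * H j x \<partial>M)" for j
  define F where "F = dyadic_expansion c"
  have summable_c: "summable (\<lambda>k. sqrt (\<Sum>j\<in>dyadic_block k. (c j)^2))"
    using summable by (simp add: c_def)
  have F: "square_integrable M F"
    unfolding F_def using summable_c by (rule square_integrable_dyadic_expansion)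
  have "\<forall>j\<ge>1. (\<integral>x. (g x - F x) * H j x \<partial>M) = 0"
  proof (intro allI impI)
    fix j :: nat assume "1 \<le> j"
    then have "(\<integral>x. F x * H j x \<partial>M) = c j"
      unfolding F_def by (rule integral_dyadic_expansion_mult_basis[OF summable_c])
    then show "(\<integral>x. (g x - F x) * H j x \<partial>M) = 0"
      using g F square_integrable_basis
      by (simp add: left_diff_distrib square_integrable_mult c_def)
  qed
  then have "AE x in M. x \<in> S \<longrightarrow> g x - F x = 0"
    by (intro complete square_integrable_diff g F)
  then have "AE x in M. (g x)^2 = F x * g x"
    by eventually_elim (use g_zero in \<open>auto simp: power2_eq_square\<close>)
  then have "(\<integral>x. (g x)^2 \<partial>M) = (\<integral>x. F x * g x \<partial>M)"
    using g F by (intro integral_cong_AE) (auto simp: square_integrable_def)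
  moreover have "(\<lambda>k. \<Sum>j\<in>dyadic_block k. c j * c j) sums (\<integral>x. F x * g x \<partial>M)"
    using sums_integral_dyadic_expansion_mult[OF summable_c g]
    by (simp add: F_def c_def[symmetric] mult.commute[of "H _ _"])
  ultimately show ?thesis
    by (simp add: c_def power2_eq_square)
qed

lemma Parseval_normalized_indicator:
  assumes A: "A \<in> sets M" "0 < measure M A" "emeasure M A < \<infinity>" and "A \<subseteq> S"
    and summable: "summable (\<lambda>k. sqrt (\<Sum>j\<in>dyadic_block k. (\<integral>x. normalized_indicator M A x * H j x \<partial>M)^2))"
  shows "(\<lambda>k. \<Sum>j\<in>dyadic_block k. (\<integral>x. normalized_indicator M A x * H j x \<partial>M)^2) sums 1"
proof -
  have "(\<lambda>k. \<Sum>j\<in>dyadic_block k. (\<integral>x. normalized_indicator M A x * H j x \<partial>M)^2) sums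
      (\<integral>x. (normalized_indicator M A x)^2 \<partial>M)"
    by (rule dyadic_Parseval[OF square_integrable_normalized_indicator[OF A] _ summable])
      (use \<open>A \<subseteq> S\<close> in \<open>auto simp: normalized_indicator_def indicator_def\<close>)
  then show ?thesis
    using A by (simp add: integral_normalized_indicator_square)
qed

end

section \<open>Local masses on an interval\<close>

lemma interval_subdivision:
  fixes x1 x2 :: real and n :: nat
  assumes "x1 < x2" "0 < n"
  obtains J where "\<And>m. m < n \<Longrightarrow> J m \<subseteq> {x1..x2}" "disjoint_family_on J {..<n}"
    "\<And>m. J m \<in> sets lborel" "\<And>m. 0 < measure lborel (J m)" "\<And>m. emeasure lborel (J m) < \<infinity>"
proof
  define \<delta> where "\<delta> = (x2 - x1) / n"
  have \<delta>: "0 < \<delta>" unfolding \<delta>_def using assms by simp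
  define J where "J m = {x1 + m * \<delta> ..< x1 + (m + 1) * \<delta>}" for m :: nat
  show "J m \<subseteq> {x1..x2}" if "m < n" for m
  proof -
    have "(m + 1) * \<delta> \<le> n * \<delta>" using that \<delta> by (intro mult_right_mono) auto
    moreover have "0 \<le> m * \<delta>" using \<delta> by simp
    moreover have "n * \<delta> = x2 - x1" using assms(2) by (simp add: \<delta>_def)
    ultimately show ?thesis by (auto simp: J_def)
  qed
  show "disjoint_family_on J {..<n}"
    unfolding disjoint_family_on_def
  proof (intro ballI impI)
    fix m l :: nat assume "m \<noteq> l"
    have "x \<notin> J l" if "x \<in> J m" "m < l" for x m l
    proof -
      have "(m + 1) * \<delta> \<le> l * \<delta>" using \<open>m < l\<close> \<delta> by (intro mult_right_mono) auto
      then show ?thesis using that by (auto simp: J_def)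
    qed
    then show "J m \<inter> J l = {}" using \<open>m \<noteq> l\<close> by (metis disjoint_iff linorder_neqE_nat)
  qed
  show "J m \<in> sets lborel" "0 < measure lborel (J m)" "emeasure lborel (J m) < \<infinity>" for m
    using \<delta> by (simp_all add: J_def algebra_simps)
qed

definition dyadic_local_mass :: "'a measure \<Rightarrow> (nat \<Rightarrow> 'a \<Rightarrow> real) \<Rightarrow> 'a set \<Rightarrow> nat \<Rightarrow> real" where
  "dyadic_local_mass M H I k = (\<Sum>j\<in>dyadic_block k. \<integral>x. indicator I x * (H j x)^2 \<partial>M)"

lemma dyadic_local_mass_nonneg: "0 \<le> dyadic_local_mass M H I k"
  unfolding dyadic_local_mass_def by (intro sum_nonneg integral_nonneg_AE) simp

lemma real_le_suminf_dyadic_local_mass: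
  fixes x1 x2 :: real and n :: nat
  assumes "orthonormal_basis_on lborel H S" "{x1..x2} \<subseteq> S" "x1 < x2" "0 < n"
    and summable: "summable (\<lambda>k. sqrt (dyadic_local_mass lborel H {x1..x2} k))"
  shows "real n \<le> (\<Sum>k. dyadic_local_mass lborel H {x1..x2} k)"
proof -
  have I: "{x1..x2} \<in> sets lborel"
    by (simp only: sets_lborel atLeastAtMost_borel)
  interpret orthonormal_basis_on lborel H S by fact
  define A where "A = dyadic_local_mass lborel H {x1..x2}"
  have sqrt_A: "summable (\<lambda>k. sqrt (A k))"
    using summable by (simp add: A_def)
  obtain J where J_sub: "\<And>m. m < n \<Longrightarrow> J m \<subseteq> {x1..x2}" and J_disj: "disjoint_family_on J {..<n}"
    and J: "\<And>m. J m \<in> sets lborel" "\<And>m. 0 < measure lborel (J m)" "\<And>m. emeasure lborel (J m) < \<infinity>"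
    using interval_subdivision[OF \<open>x1 < x2\<close> \<open>0 < n\<close>] by blast
  define c where "c m j = (\<integral>x. normalized_indicator lborel (J m) x * H j x \<partial>lborel)" for m j
  have Bessel: "(\<Sum>m<n. (c m j)^2) \<le> \<integral>x. indicator {x1..x2} x * (H j x)^2 \<partial>lborel" for j
    unfolding c_def
    by (rule sum_square_integral_normalized_indicator_le[OF J J_disj J_sub I square_integrable_basis])
  then have block_Bessel: "(\<Sum>j\<in>dyadic_block k. \<Sum>m<n. (c m j)^2) \<le> A k" for k
    unfolding A_def dyadic_local_mass_def by (rule sum_mono)
  have Parseval: "(\<lambda>k. \<Sum>j\<in>dyadic_block k. (c m j)^2) sums 1" if "m < n" for m
    unfolding c_def
  proof (rule Parseval_normalized_indicator[OF J])
    show "J m \<subseteq> S"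
      using J_sub[OF \<open>m < n\<close>] assms(2) by blast
    have "(\<Sum>j\<in>dyadic_block k. (c m j)^2) \<le> (\<Sum>j\<in>dyadic_block k. \<Sum>m<n. (c m j)^2)" for k
      using \<open>m < n\<close> by (intro sum_mono member_le_sum) auto
    then have "(\<Sum>j\<in>dyadic_block k. (c m j)^2) \<le> A k" for k
      using block_Bessel order_trans by blast
    then show "summable (\<lambda>k. sqrt (\<Sum>j\<in>dyadic_block k. (\<integral>x. normalized_indicator lborel (J m) x * H j x \<partial>lborel)^2))"
      unfolding c_def by (intro summable_comparison_test'[OF sqrt_A, of 0]) (simp add: sum_nonneg)
  qed
  have "(\<lambda>k. \<Sum>m<n. \<Sum>j\<in>dyadic_block k. (c m j)^2) sums (\<Sum>m<n. 1)"
    using Parseval by (intro sums_sum) simp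
  moreover have "summable A"
    using sqrt_A by (rule summable_of_summable_sqrt[rotated]) (simp add: A_def dyadic_local_mass_nonneg)
  moreover have "(\<Sum>m<n. \<Sum>j\<in>dyadic_block k. (c m j)^2) \<le> A k" for k
    by (subst sum.swap) (rule block_Bessel)
  ultimately show ?thesis
    unfolding A_def[symmetric] by (intro sums_le[OF _ _ summable_sums]) simp_all
qed

theorem not_summable_sqrt_dyadic_local_mass:
  fixes x1 x2 :: real
  assumes "orthonormal_basis_on lborel H S" "{x1..x2} \<subseteq> S" "x1 < x2"
  shows "\<not> summable (\<lambda>k. sqrt (dyadic_local_mass lborel H {x1..x2} k))"
proof
  assume summable: "summable (\<lambda>k. sqrt (dyadic_local_mass lborel H {x1..x2} k))"
  define n where "n = nat \<lceil>\<Sum>k. dyadic_local_mass lborel H {x1..x2} k\<rceil> + 1"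
  have "real n \<le> (\<Sum>k. dyadic_local_mass lborel H {x1..x2} k)"
    using assms summable by (intro real_le_suminf_dyadic_local_mass) (simp_all add: n_def)
  then show False
    unfolding n_def by linarith
qed

section \<open>Orthonormal bases of \<open>L\<^sup>2[0,1]\<close>\<close>

text \<open>\<open>ONB01\<close> says nothing about \<open>h 0\<close>, so index \<open>0\<close> is sent to the zero function.\<close>

definition zero_extension :: "(nat \<Rightarrow> real \<Rightarrow> real) \<Rightarrow> nat \<Rightarrow> real \<Rightarrow> real" where
  "zero_extension h j x = (if j = 0 then 0 else indicator {0..1} x * h j x)"

lemma set_integral_eq_zero_extension:
  "1 \<le> j \<Longrightarrow> (LINT x:{0..1}|lborel. f x * h j x) = (\<integral>x. f x * zero_extension h j x \<partial>lborel)"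
  unfolding set_lebesgue_integral_def
  by (intro Bochner_Integration.integral_cong) (auto simp: zero_extension_def indicator_def)

lemma square_integrable_iff_sq_int01:
  "square_integrable lborel (\<lambda>x. indicator {0..1} x * f x) \<longleftrightarrow> sq_int01 f"
  by (simp add: square_integrable_def sq_int01_def set_borel_measurable_def set_integrable_def
      indicator_mult_square)

lemma ONB01_orthonormal_basis_on:
  assumes "ONB01 h"
  shows "orthonormal_basis_on lborel (zero_extension h) {0..1}"
proof
  show "square_integrable lborel (zero_extension h j)" for j
  proof (cases "j = 0")
    case False
    then have "square_integrable lborel (\<lambda>x. indicator {0..1} x * h j x)"
      using assms by (simp add: ONB01_def square_integrable_iff_sq_int01)
    then show ?thesis
      using False by (simp add: zero_extension_def[abs_def])
  qed (simp add: zero_extension_def[abs_def] square_integrable_def)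
  show "(\<integral>x. zero_extension h i x * zero_extension h j x \<partial>lborel) = (if i = j then 1 else 0)"
    if "1 \<le> i" "1 \<le> j" for i j
  proof -
    have "(\<integral>x. zero_extension h i x * zero_extension h j x \<partial>lborel) =
        (\<integral>x. h i x * zero_extension h j x \<partial>lborel)"
      using that by (intro Bochner_Integration.integral_cong) (auto simp: zero_extension_def indicator_def)
    then show ?thesis
      using assms that by (simp add: ONB01_def inner01_def set_integral_eq_zero_extension)
  qed
  show "AE x in lborel. x \<in> {0..1} \<longrightarrow> f x = 0"
    if f: "square_integrable lborel f" and orth: "\<forall>j\<ge>1. (\<integral>x. f x * zero_extension h j x \<partial>lborel) = 0"
    for f
  proof -
    have "sq_int01 f"
      using square_integrable_indicator_mult[OF f, of "{0..1}"]
      by (simp add: square_integrable_iff_sq_int01[symmetric])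
    moreover have "inner01 f (h j) = 0" if "1 \<le> j" for j
      using orth that by (simp add: inner01_def set_integral_eq_zero_extension)
    ultimately show ?thesis
      using assms by (auto simp: ONB01_def)
  qed
qed

lemma dyadic_local_mass_zero_extension:
  assumes "I \<subseteq> {0..1}"
  shows "dyadic_local_mass lborel (zero_extension h) I k = (\<Sum>j\<in>dyadic_block k. LINT x:I|lborel. (h j x)^2)"
  unfolding dyadic_local_mass_def set_lebesgue_integral_def using assms
  by (intro sum.cong Bochner_Integration.integral_cong)
    (auto simp: zero_extension_def indicator_def dest: dyadic_block_ge_1)

lemma eventually_le_powr_of_finite:
  fixes a :: "nat \<Rightarrow> real" and \<alpha> :: real
  assumes "finite {j. 1 \<le> j \<and> sqrt (a j) > real j powr (-1/2 - \<alpha>)}" and nonneg: "\<And>j. 0 \<le> a j"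
  shows "eventually (\<lambda>j. a j \<le> real j powr (-1 - 2*\<alpha>)) sequentially"
proof -
  have "eventually (\<lambda>j. 1 \<le> j \<longrightarrow> sqrt (a j) \<le> real j powr (-1/2 - \<alpha>)) sequentially"
    using assms(1) unfolding cofinite_eq_sequentially[symmetric] eventually_cofinite
    by (simp add: not_le)
  moreover have "eventually (\<lambda>j. 1 \<le> j) sequentially"
    by (rule eventually_ge_at_top)
  ultimately show ?thesis
  proof eventually_elim
    case (elim j)
    then have "sqrt (a j)^2 \<le> (real j powr (-1/2 - \<alpha>))^2"
      using nonneg by (intro power_mono) simp_all
    then show "a j \<le> real j powr (-1 - 2*\<alpha>)"
      using nonneg[of j] by (simp add: power2_eq_square flip: powr_add)
  qed
qed

theorem mainTheorem14:
  fixes h :: "nat \<Rightarrow> real \<Rightarrow> real" and x1 x2 \<alpha> :: real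
  assumes "ONB01 h"
    and "0 \<le> x1" and "x1 < x2" and "x2 \<le> 1"
    and "\<alpha> > 0"
  shows "infinite {j::nat. j \<ge> 1 \<and>
           sqrt (LINT x:{x1..x2}|lborel. (h j x)^2) > real j powr (-1/2 - \<alpha>)}"
proof
  define a where "a j = (LINT x:{x1..x2}|lborel. (h j x)^2)" for j
  have a_nonneg: "0 \<le> a j" for j
    unfolding a_def set_lebesgue_integral_def by (rule integral_nonneg_AE) simp
  assume "finite {j::nat. j \<ge> 1 \<and>
           sqrt (LINT x:{x1..x2}|lborel. (h j x)^2) > real j powr (-1/2 - \<alpha>)}"
  then have "eventually (\<lambda>j. a j \<le> real j powr (-1 - 2*\<alpha>)) sequentially"
    by (intro eventually_le_powr_of_finite a_nonneg) (simp add: a_def)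
  then have "summable (\<lambda>k. sqrt (\<Sum>j\<in>dyadic_block k. a j))"
    by (rule summable_sqrt_dyadic_block_sums[OF \<open>\<alpha> > 0\<close> a_nonneg])
  then have "summable (\<lambda>k. sqrt (dyadic_local_mass lborel (zero_extension h) {x1..x2} k))"
    using assms(2,4) by (simp add: dyadic_local_mass_zero_extension a_def)
  then show False
    using not_summable_sqrt_dyadic_local_mass[OF ONB01_orthonormal_basis_on[OF assms(1)]] assms(2-4)
    by simp
qed

end
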